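(* Fix an integer $\ell>6$ and a real $t>0$. For integers $k>2$ let $T=\lfloor tk\rfloor$ and let $H_{\ell,k,t}$ be the graph constructed as follows: for each $1\le r\le k$ take disjoint paths $x_{0,r}x_{1,r}\cdots x_{\ell+1,r}$ and $y_{0,r}y_{1,r}y_{2,r}y_{3,r}y_{4,r}y_{5,r}$; identify all $x_{0,r},y_{0,r}$ into a single vertex $u$; identify all $x_{\ell+1,r},y_{5,r}$ into a single vertex $v$; identify $y_{2,1},\dots,y_{2,k}$ into a single vertex $y_{2,*}$ and $y_{3,1},\dots,y_{3,k}$ into a single vertex $y_{3,*}$ (the $k$ edges $y_{2,r}y_{3,r}$ becoming a single edge); finally add $T$ pendant vertices $u_1,\dots,u_T$ adjacent to $u$ and $T$ pendant vertices $v_1,\dots,v_T$ adjacent to $v$. Then for all sufficiently large $k$, the spectral path from $v_1$ to $u_1$ (with special vertex $u_1$) has length $\ell+3$, while the distance between $v_1$ and $u_1$ is $7$.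
   Context: For a finite connected graph $G$ with Laplacian $L=D-A$ and special vertex $s$ such that $G-s$ is connected, let $L_s$ be $L$ with row and column $s$ deleted, and let $f_s$ be an eigenvector of $L_s$ for its smallest eigenvalue, chosen positive on $V\setminus\{s\}$ (possible by a result of Steinerberger), extended by $f_s(s)=0$. Every vertex $x\ne s$ has a neighbor with strictly smaller $f_s$-value. The spectral tree $T_s$ is formed by joining each vertex $x\neq s$ to a neighbor minimizing $f_s$ (ties broken arbitrarily); the spectral path from $x$ to $s$ is the unique path from $x$ to $s$ in $T_s$. Length of a path is its number of edges. *)

theory Defs
  imports Complex_Main
begin

text \<open>A finite graph is given by a vertex set Vs and a symmetric irreflexive
adjacency predicate E (only its restriction to Vs matters).\<close>

definition nbrs :: "'a set \<Rightarrow> ('a \<Rightarrow> 'a \<Rightarrow> bool) \<Rightarrow> 'a \<Rightarrow> 'a set" where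
  "nbrs Vs E x = {y \<in> Vs. E x y}"

definition gdeg :: "'a set \<Rightarrow> ('a \<Rightarrow> 'a \<Rightarrow> bool) \<Rightarrow> 'a \<Rightarrow> nat" where
  "gdeg Vs E x = card (nbrs Vs E x)"

text \<open>Eigen-equation for the grounded Laplacian L_s (L = D - A with row and
column s deleted), for a vector g indexed by Vs - {s}:
(L_s g)(x) = deg(x) g(x) - sum over neighbours y /= s of g(y).\<close>

definition Ls_eig :: "'a set \<Rightarrow> ('a \<Rightarrow> 'a \<Rightarrow> bool) \<Rightarrow> 'a \<Rightarrow> ('a \<Rightarrow> real) \<Rightarrow> real \<Rightarrow> bool" where
  "Ls_eig Vs E s g \<mu> \<longleftrightarrow>
     (\<forall>x \<in> Vs - {s}. real (gdeg Vs E x) * g x - (\<Sum>y \<in> nbrs Vs E x - {s}. g y) = \<mu> * g x)"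

definition Ls_eigenvalue :: "'a set \<Rightarrow> ('a \<Rightarrow> 'a \<Rightarrow> bool) \<Rightarrow> 'a \<Rightarrow> real \<Rightarrow> bool" where
  "Ls_eigenvalue Vs E s \<mu> \<longleftrightarrow> (\<exists>g. (\<exists>x \<in> Vs - {s}. g x \<noteq> 0) \<and> Ls_eig Vs E s g \<mu>)"

definition spectral_vector :: "'a set \<Rightarrow> ('a \<Rightarrow> 'a \<Rightarrow> bool) \<Rightarrow> 'a \<Rightarrow> ('a \<Rightarrow> real) \<Rightarrow> bool" where
  "spectral_vector Vs E s f \<longleftrightarrow>
     (\<exists>lam. Ls_eigenvalue Vs E s lam \<and> (\<forall>\<mu>. Ls_eigenvalue Vs E s \<mu> \<longrightarrow> lam \<le> \<mu>) \<and>
          Ls_eig Vs E s f lam) \<and>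
     (\<forall>x \<in> Vs - {s}. f x > 0) \<and> f s = 0"

text \<open>A spectral tree T_s is encoded by its parent map p: every x /= s is joined
to a neighbour p x minimising f (ties broken arbitrarily).\<close>

definition spectral_tree :: "'a set \<Rightarrow> ('a \<Rightarrow> 'a \<Rightarrow> bool) \<Rightarrow> 'a \<Rightarrow> ('a \<Rightarrow> real) \<Rightarrow> ('a \<Rightarrow> 'a) \<Rightarrow> bool" where
  "spectral_tree Vs E s f p \<longleftrightarrow>
     (\<forall>x \<in> Vs - {s}. p x \<in> nbrs Vs E x \<and> (\<forall>y \<in> nbrs Vs E x. f (p x) \<le> f y))"

definition spectral_path_length :: "'a \<Rightarrow> ('a \<Rightarrow> 'a) \<Rightarrow> 'a \<Rightarrow> nat" where
  "spectral_path_length s p x = (LEAST n. (p ^^ n) x = s)"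

definition is_walk :: "'a set \<Rightarrow> ('a \<Rightarrow> 'a \<Rightarrow> bool) \<Rightarrow> 'a list \<Rightarrow> bool" where
  "is_walk Vs E ws \<longleftrightarrow> ws \<noteq> [] \<and> set ws \<subseteq> Vs \<and>
     (\<forall>i < length ws - 1. E (ws ! i) (ws ! Suc i))"

definition gdist :: "'a set \<Rightarrow> ('a \<Rightarrow> 'a \<Rightarrow> bool) \<Rightarrow> 'a \<Rightarrow> 'a \<Rightarrow> nat" where
  "gdist Vs E a b = (LEAST n. \<exists>ws. is_walk Vs E ws \<and> hd ws = a \<and> last ws = b \<and> length ws = n + 1)"

text \<open>Vertices: HU = u, HV = v, HX i r = x_{i,r} (1 <= i <= l), HY1 r = y_{1,r},
HY2 = y_{2,*}, HY3 = y_{3,*}, HY4 r = y_{4,r}, PU j = u_j, PV j = v_j.\<close>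

datatype hvert = HU | HV | HX nat nat | HY1 nat | HY2 | HY3 | HY4 nat | PU nat | PV nat

definition H_verts :: "nat \<Rightarrow> nat \<Rightarrow> nat \<Rightarrow> hvert set" where
  "H_verts l k T = {HU, HV, HY2, HY3} \<union> {HX i r | i r. i \<in> {1..l} \<and> r \<in> {1..k}}
     \<union> HY1 ` {1..k} \<union> HY4 ` {1..k} \<union> PU ` {1..T} \<union> PV ` {1..T}"

definition H_edge0 :: "nat \<Rightarrow> nat \<Rightarrow> nat \<Rightarrow> hvert \<Rightarrow> hvert \<Rightarrow> bool" where
  "H_edge0 l k T a b \<longleftrightarrow>
     (\<exists>r \<in> {1..k}.
         (a = HU \<and> b = HX 1 r)
       \<or> (\<exists>i \<in> {1..<l}. a = HX i r \<and> b = HX (Suc i) r)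
       \<or> (a = HX l r \<and> b = HV)
       \<or> (a = HU \<and> b = HY1 r)
       \<or> (a = HY1 r \<and> b = HY2)
       \<or> (a = HY3 \<and> b = HY4 r)
       \<or> (a = HY4 r \<and> b = HV))
   \<or> (a = HY2 \<and> b = HY3)
   \<or> (\<exists>j \<in> {1..T}. (a = HU \<and> b = PU j) \<or> (a = HV \<and> b = PV j))"

definition H_adj :: "nat \<Rightarrow> nat \<Rightarrow> nat \<Rightarrow> hvert \<Rightarrow> hvert \<Rightarrow> bool" where
  "H_adj l k T a b \<longleftrightarrow> H_edge0 l k T a b \<or> H_edge0 l k T b a"

end

theory Submission
  imports Defs
begin

text \<open>On each of the k long u-v paths the eigen-equation is the recurrence
  x_{i+1} = (2 - lam) x_i - x_{i-1}. As u is the only neighbour of u_1, summing the eigen-equation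
  gives lam * (sum of f) = f(u), and f(u) is the minimum of f; hence lam |V| \<le> 1, so
  lam (l + 1)^2 \<le> 1 for large k and a discrete Sturm argument shows that f is the same on all
  long paths. Conversely every value of f is at most 6 f(u), so lam |V| \<ge> 1/6, which for large k
  forces f(y_{4,r}) \<ge> f(v). So the neighbour of v minimising f lies on a long path, along which
  f increases strictly from u to v, and the spectral path is v_1, v, x_{l,r}, ..., x_{1,r}, u, u_1
  of length l + 3, whereas v_1 v y_{4,1} y_{3,*} y_{2,*} y_{1,1} u u_1 is a shortest path.\<close>

section \<open>Eigenvectors of the grounded Laplacian\<close>

lemma Ls_eig_local_eq:
  assumes "finite Vs" "Ls_eig Vs E s g \<mu>" "g s = 0" "x \<in> Vs - {s}"
  shows "(\<Sum>y\<in>nbrs Vs E x. g x - g y) = \<mu> * g x"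
proof -
  have "finite (nbrs Vs E x)" using assms(1) unfolding nbrs_def by simp
  then have "(\<Sum>y\<in>nbrs Vs E x - {s}. g y) = (\<Sum>y\<in>nbrs Vs E x. g y)"
    using assms(3) by (simp add: sum_diff1)
  moreover have "real (gdeg Vs E x) * g x - (\<Sum>y\<in>nbrs Vs E x - {s}. g y) = \<mu> * g x"
    using assms(2,4) unfolding Ls_eig_def by blast
  ultimately show ?thesis by (simp add: sum_subtractf gdeg_def)
qed

lemma sum_sum_antisym_eq_0:
  fixes w :: "'a \<Rightarrow> 'a \<Rightarrow> real"
  assumes "\<And>x y. w y x = - w x y"
  shows "(\<Sum>x\<in>A. \<Sum>y\<in>A. w x y) = 0"
proof -
  have "(\<Sum>x\<in>A. \<Sum>y\<in>A. w x y) = (\<Sum>y\<in>A. \<Sum>x\<in>A. w x y)" by (rule sum.swap)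
  also have "\<dots> = (\<Sum>y\<in>A. \<Sum>x\<in>A. - w y x)" by (intro sum.cong refl assms)
  also have "\<dots> = - (\<Sum>x\<in>A. \<Sum>y\<in>A. w x y)" by (simp add: sum_negf)
  finally show ?thesis by simp
qed

text \<open>Summing the local equations over V - {s}, the terms of edges inside V - {s} cancel in
  pairs.\<close>

lemma Ls_eig_sum_eq_boundary:
  assumes "finite Vs" "s \<in> Vs" "\<And>x y. E x y = E y x" "Ls_eig Vs E s g \<mu>" "g s = 0"
  shows "\<mu> * (\<Sum>x\<in>Vs - {s}. g x) = (\<Sum>x\<in>{x\<in>Vs - {s}. E x s}. g x)"
proof -
  let ?A = "Vs - {s}"
  define w where "w x y = (if E x y then g x - g y else 0)" for x y
  have w_antisym: "w y x = - w x y" for x y unfolding w_def using assms(3) by simp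
  have split_s: "(\<Sum>y\<in>nbrs Vs E x. g x - g y) = (\<Sum>y\<in>?A. w x y) + (if E x s then g x else 0)"
    for x
  proof -
    have "(\<Sum>y\<in>nbrs Vs E x. g x - g y) = (\<Sum>y\<in>Vs. w x y)"
      unfolding nbrs_def w_def by (simp add: sum.inter_filter[OF assms(1)])
    also have "\<dots> = w x s + (\<Sum>y\<in>?A. w x y)" by (rule sum.remove[OF assms(1,2)])
    finally show ?thesis using assms(5) by (simp add: w_def)
  qed
  have "\<mu> * (\<Sum>x\<in>?A. g x) = (\<Sum>x\<in>?A. \<Sum>y\<in>nbrs Vs E x. g x - g y)"
    by (simp add: sum_distrib_left Ls_eig_local_eq[OF assms(1,4,5)])
  also have "\<dots> = (\<Sum>x\<in>?A. \<Sum>y\<in>?A. w x y) + (\<Sum>x\<in>?A. if E x s then g x else 0)"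
    by (simp add: split_s sum.distrib)
  also have "\<dots> = (\<Sum>x\<in>?A. if E x s then g x else 0)"
    using sum_sum_antisym_eq_0[of w, OF w_antisym] by simp
  also have "\<dots> = (\<Sum>x\<in>{x\<in>?A. E x s}. g x)"
    using assms(1) by (intro sum.inter_filter[symmetric]) simp
  finally show ?thesis .
qed

lemma Ls_eig_pos_eigenvalue:
  assumes "finite Vs" "s \<in> Vs" "\<And>x y. E x y = E y x" "Ls_eig Vs E s g \<mu>" "g s = 0"
    and "\<forall>x\<in>Vs - {s}. g x > 0" and "u \<in> Vs - {s}" "E u s"
  shows "\<mu> > 0"
proof -
  have "0 < g u" using assms(6,7) by blast
  also have "g u \<le> (\<Sum>x\<in>{x\<in>Vs - {s}. E x s}. g x)"
    using assms(1,6-8) by (intro member_le_sum) (auto intro: less_imp_le)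
  also have "\<dots> = \<mu> * (\<Sum>x\<in>Vs - {s}. g x)" using Ls_eig_sum_eq_boundary[OF assms(1-5)] by simp
  finally have "0 < \<mu> * (\<Sum>x\<in>Vs - {s}. g x)" .
  moreover have "0 < (\<Sum>x\<in>Vs - {s}. g x)"
    using assms(1,6,7) by (intro sum_pos2[of _ u]) (auto intro: less_imp_le)
  ultimately show ?thesis by (simp add: zero_less_mult_iff)
qed

lemma Ls_eig_smaller_nbr:
  assumes "finite Vs" "Ls_eig Vs E s g \<mu>" "g s = 0" "x \<in> Vs - {s}" "\<mu> > 0" "g x > 0"
  shows "\<exists>y\<in>nbrs Vs E x. g y < g x"
proof (rule ccontr)
  assume "\<not> ?thesis"
  then have "(\<Sum>y\<in>nbrs Vs E x. g x - g y) \<le> 0" by (intro sum_nonpos) auto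
  moreover have "\<mu> * g x > 0" using assms(5,6) by simp
  ultimately show False using Ls_eig_local_eq[OF assms(1-4)] by simp
qed

lemma Ls_eig_min_adjacent:
  assumes "finite Vs" "Ls_eig Vs E s g \<mu>" "g s = 0" "\<mu> > 0"
    and "\<forall>x\<in>Vs - {s}. g x > 0" and "m \<in> Vs - {s}" "\<forall>x\<in>Vs - {s}. g m \<le> g x"
  shows "E m s"
proof -
  obtain y where "y \<in> nbrs Vs E m" "g y < g m"
    using Ls_eig_smaller_nbr[OF assms(1-3,6,4)] assms(5,6) by blast
  then have "y = s" "E m y" using assms(7) unfolding nbrs_def by force+
  then show ?thesis by simp
qed

section \<open>A discrete Sturm comparison\<close>

text \<open>The increments of \<delta> drop by lam \<delta> m \<le> lam m \<delta> 1 at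
  step m, so they stay above \<delta> 1 (1 - lam m^2), which is nonnegative up to m = n + 1.\<close>

lemma recurrence_stays_positive:
  fixes \<delta> :: "nat \<Rightarrow> real"
  assumes \<delta>0: "\<delta> 0 = 0" and \<delta>1: "\<delta> 1 > 0"
    and rec: "\<And>i. 1 \<le> i \<Longrightarrow> i \<le> n \<Longrightarrow> \<delta> (Suc i) = (2 - lam) * \<delta> i - \<delta> (i - 1)"
    and lam: "0 \<le> lam" "lam * (real n + 1)^2 \<le> 1"
  shows "\<delta> (n + 1) > 0"
proof -
  have "\<delta> 1 * (1 - lam * (real m)^2) \<le> \<delta> m - \<delta> (m - 1) \<and> \<delta> m - \<delta> (m - 1) \<le> \<delta> 1
      \<and> \<delta> 1 \<le> \<delta> m \<and> \<delta> m \<le> real m * \<delta> 1"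
    if "1 \<le> m" "m \<le> n + 1" for m
    using that
  proof (induction m rule: nat_induct_at_least)
    case base
    then show ?case using \<delta>0 \<delta>1 lam(1) by simp
  next
    case (Suc m)
    then have IH: "\<delta> 1 * (1 - lam * (real m)^2) \<le> \<delta> m - \<delta> (m - 1)" "\<delta> m - \<delta> (m - 1) \<le> \<delta> 1"
      "\<delta> 1 \<le> \<delta> m" "\<delta> m \<le> real m * \<delta> 1" by simp_all
    have step: "\<delta> (Suc m) - \<delta> m = (\<delta> m - \<delta> (m - 1)) - lam * \<delta> m"
      using rec[of m] Suc by (simp add: algebra_simps)
    have "lam * \<delta> m \<le> lam * (real m * \<delta> 1)" using IH(4) lam(1) by (rule mult_left_mono)
    moreover have "0 \<le> lam * \<delta> m" using IH(3) \<delta>1 lam(1) by simp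
    moreover have "\<delta> 1 * (1 - lam * (real m)^2) - lam * (real m * \<delta> 1)
        = \<delta> 1 * (1 - lam * (real (Suc m))^2) + \<delta> 1 * lam * (real m + 1)"
      by (simp add: algebra_simps power2_eq_square)
    moreover have "0 \<le> \<delta> 1 * lam * (real m + 1)" using \<delta>1 lam(1) by simp
    moreover have "lam * (real (Suc m))^2 \<le> lam * (real n + 1)^2"
      using Suc.prems lam(1) by (intro mult_left_mono power_mono) auto
    then have "0 \<le> \<delta> 1 * (1 - lam * (real (Suc m))^2)" using lam(2) \<delta>1 by simp
    ultimately show ?case using step IH by (simp add: algebra_simps)
  qed
  from this[of "n + 1"] show ?thesis using \<delta>1 by simp
qed

lemma recurrence_zero:
  fixes \<delta> :: "nat \<Rightarrow> real"
  assumes \<delta>0: "\<delta> 0 = 0" and \<delta>n: "\<delta> (n + 1) = 0"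
    and rec: "\<And>i. 1 \<le> i \<Longrightarrow> i \<le> n \<Longrightarrow> \<delta> (Suc i) = (2 - lam) * \<delta> i - \<delta> (i - 1)"
    and lam: "0 \<le> lam" "lam * (real n + 1)^2 \<le> 1"
    and "i \<le> n + 1"
  shows "\<delta> i = 0"
proof -
  have "\<not> \<delta> 1 > 0" using recurrence_stays_positive[of \<delta> n lam] assms(1-5) by auto
  moreover have "\<not> - \<delta> 1 > 0"
    using recurrence_stays_positive[of "\<lambda>i. - \<delta> i" n lam] assms(1-5) by auto
  ultimately have \<delta>1: "\<delta> 1 = 0" by simp
  have "\<delta> j = 0 \<and> \<delta> (Suc j) = 0" if "j \<le> n" for j
    using that
  proof (induction j)
    case 0
    then show ?case using \<delta>0 \<delta>1 by simp
  next
    case (Suc j)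
    then show ?case using rec[of "Suc j"] by simp
  qed
  then show ?thesis using \<delta>n \<open>i \<le> n + 1\<close> by (metis Suc_eq_plus1 le_Suc_eq)
qed

lemma walk_height_le:
  fixes h :: "'a \<Rightarrow> nat"
  assumes "is_walk Vs E ws" "\<And>x y. E x y \<Longrightarrow> h x \<le> h y + 1" "i < length ws"
  shows "h (ws ! 0) \<le> h (ws ! i) + i"
  using assms(3)
proof (induction i)
  case 0
  then show ?case by simp
next
  case (Suc i)
  have "E (ws ! i) (ws ! Suc i)" using assms(1) Suc.prems unfolding is_walk_def by auto
  then show ?case using Suc assms(2)[of "ws ! i" "ws ! Suc i"] by simp
qed

lemma gdist_eqI:
  fixes h :: "'a \<Rightarrow> nat"
  assumes "is_walk Vs E ws" "hd ws = a" "last ws = b" "length ws = n + 1"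
    and "\<And>x y. E x y \<Longrightarrow> h x \<le> h y + 1" "h a = h b + n"
  shows "gdist Vs E a b = n"
  unfolding gdist_def
proof (rule Least_equality)
  show "\<exists>ws. is_walk Vs E ws \<and> hd ws = a \<and> last ws = b \<and> length ws = n + 1"
    using assms(1-4) by blast
next
  fix m
  assume "\<exists>ws. is_walk Vs E ws \<and> hd ws = a \<and> last ws = b \<and> length ws = m + 1"
  then obtain vs where vs: "is_walk Vs E vs" "hd vs = a" "last vs = b" "length vs = m + 1"
    by blast
  moreover have "vs \<noteq> []" using vs(4) by auto
  ultimately have "vs ! 0 = a" "vs ! m = b" by (simp_all add: hd_conv_nth last_conv_nth)
  then show "n \<le> m" using walk_height_le[of Vs E vs h m, OF vs(1) assms(5)] vs(4) assms(6) by simp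
qed

lemma card_H_verts_le: "card (H_verts l k T) \<le> 4 + l * k + 2 * k + 2 * T"
proof -
  let ?X = "{HX i r | i r. i \<in> {1..l} \<and> r \<in> {1..k}}"
  have X: "?X = (\<lambda>(i, r). HX i r) ` ({1..l} \<times> {1..k})" by auto
  have "card (H_verts l k T) \<le> card {HU, HV, HY2, HY3} + card ?X
      + card (HY1 ` {1..k}) + card (HY4 ` {1..k}) + card (PU ` {1..T}) + card (PV ` {1..T})"
    unfolding H_verts_def by (intro order_trans[OF card_Un_le] add_mono order_refl)
  also have "\<dots> \<le> 4 + l * k + k + k + T + T"
    unfolding X
    by (intro add_mono card_image_le[THEN order_trans] order_refl) (auto simp: card_insert_le_m1)
  finally show ?thesis by simp
qed

locale H_graph =
  fixes l k T :: nat
  assumes l_ge_2: "l \<ge> 2" and k_ge_1: "k \<ge> 1" and T_ge_1: "T \<ge> 1"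
begin

abbreviation "V \<equiv> H_verts l k T"
abbreviation "E \<equiv> H_adj l k T"

text \<open>path_vertex r i is x_{i,r}, where x_{0,r} = u and x_{l+1,r} = v.\<close>

definition path_vertex :: "nat \<Rightarrow> nat \<Rightarrow> hvert" where
  "path_vertex r i = (if i = 0 then HU else if i = l + 1 then HV else HX i r)"

lemma path_vertex_0 [simp]: "path_vertex r 0 = HU"
  unfolding path_vertex_def by simp

lemma path_vertex_Suc_l [simp]: "path_vertex r (Suc l) = HV"
  unfolding path_vertex_def by simp

lemma path_vertex_HX: "1 \<le> i \<Longrightarrow> i \<le> l \<Longrightarrow> path_vertex r i = HX i r"
  unfolding path_vertex_def by simp

lemma finite_V: "finite V"
proof -
  have "{HX i r | i r. i \<in> {1..l} \<and> r \<in> {1..k}} = (\<lambda>(i, r). HX i r) ` ({1..l} \<times> {1..k})"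
    by auto
  then show ?thesis unfolding H_verts_def by simp
qed

lemma mem_V [simp]:
  "HU \<in> V" "HV \<in> V" "HY2 \<in> V" "HY3 \<in> V"
  "HX i r \<in> V \<longleftrightarrow> i \<in> {1..l} \<and> r \<in> {1..k}"
  "HY1 r \<in> V \<longleftrightarrow> r \<in> {1..k}" "HY4 r \<in> V \<longleftrightarrow> r \<in> {1..k}"
  "PU j \<in> V \<longleftrightarrow> j \<in> {1..T}" "PV j \<in> V \<longleftrightarrow> j \<in> {1..T}"
  unfolding H_verts_def by auto

lemma path_vertex_mem: "r \<in> {1..k} \<Longrightarrow> i \<le> l + 1 \<Longrightarrow> path_vertex r i \<in> V - {PU 1}"
  unfolding path_vertex_def by auto

lemma E_sym: "E x y = E y x"
  unfolding H_adj_def by auto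

lemma nbrs_HU: "nbrs V E HU = HX 1 ` {1..k} \<union> HY1 ` {1..k} \<union> PU ` {1..T}"
  unfolding nbrs_def H_verts_def H_adj_def H_edge0_def using l_ge_2 by auto

lemma nbrs_HV: "nbrs V E HV = HX l ` {1..k} \<union> HY4 ` {1..k} \<union> PV ` {1..T}"
  unfolding nbrs_def H_verts_def H_adj_def H_edge0_def using l_ge_2 by auto

lemma nbrs_HY1: "r \<in> {1..k} \<Longrightarrow> nbrs V E (HY1 r) = {HU, HY2}"
  unfolding nbrs_def H_verts_def H_adj_def H_edge0_def using l_ge_2 by auto

lemma nbrs_HY4: "r \<in> {1..k} \<Longrightarrow> nbrs V E (HY4 r) = {HY3, HV}"
  unfolding nbrs_def H_verts_def H_adj_def H_edge0_def using l_ge_2 by auto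

lemma nbrs_HY2: "nbrs V E HY2 = HY1 ` {1..k} \<union> {HY3}"
  unfolding nbrs_def H_verts_def H_adj_def H_edge0_def using l_ge_2 by auto

lemma nbrs_HY3: "nbrs V E HY3 = HY4 ` {1..k} \<union> {HY2}"
  unfolding nbrs_def H_verts_def H_adj_def H_edge0_def using l_ge_2 by auto

lemma nbrs_PU: "j \<in> {1..T} \<Longrightarrow> nbrs V E (PU j) = {HU}"
  unfolding nbrs_def H_verts_def H_adj_def H_edge0_def using l_ge_2 k_ge_1 by auto

lemma nbrs_PV: "j \<in> {1..T} \<Longrightarrow> nbrs V E (PV j) = {HV}"
  unfolding nbrs_def H_verts_def H_adj_def H_edge0_def using l_ge_2 k_ge_1 by auto

lemma nbrs_HX: "i \<in> {1..l} \<Longrightarrow> r \<in> {1..k} \<Longrightarrow>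
    nbrs V E (HX i r) = {path_vertex r (i - 1), path_vertex r (i + 1)}"
  unfolding nbrs_def H_verts_def H_adj_def H_edge0_def path_vertex_def using l_ge_2
  by (auto split: if_splits)

lemma sum_nbrs_HU:
  "(\<Sum>y\<in>nbrs V E HU. g y)
    = (\<Sum>r\<in>{1..k}. g (HX 1 r)) + (\<Sum>r\<in>{1..k}. g (HY1 r)) + (\<Sum>j\<in>{1..T}. g (PU j))"
proof -
  have "HX 1 ` {1..k} \<inter> HY1 ` {1..k} = {}" "(HX 1 ` {1..k} \<union> HY1 ` {1..k}) \<inter> PU ` {1..T} = {}"
    by auto
  then show ?thesis unfolding nbrs_HU by (simp add: sum.union_disjoint sum.reindex inj_on_def)
qed

lemma sum_nbrs_HV:
  "(\<Sum>y\<in>nbrs V E HV. g y)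
    = (\<Sum>r\<in>{1..k}. g (HX l r)) + (\<Sum>r\<in>{1..k}. g (HY4 r)) + (\<Sum>j\<in>{1..T}. g (PV j))"
proof -
  have "HX l ` {1..k} \<inter> HY4 ` {1..k} = {}" "(HX l ` {1..k} \<union> HY4 ` {1..k}) \<inter> PV ` {1..T} = {}"
    by auto
  then show ?thesis unfolding nbrs_HV by (simp add: sum.union_disjoint sum.reindex inj_on_def)
qed

lemma sum_nbrs_HY2: "(\<Sum>y\<in>nbrs V E HY2. g y) = (\<Sum>r\<in>{1..k}. g (HY1 r)) + g HY3"
proof -
  have "HY3 \<notin> HY1 ` {1..k}" by auto
  then show ?thesis unfolding nbrs_HY2 by (simp add: sum.reindex inj_on_def add.commute)
qed

lemma sum_nbrs_HY3: "(\<Sum>y\<in>nbrs V E HY3. g y) = (\<Sum>r\<in>{1..k}. g (HY4 r)) + g HY2"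
proof -
  have "HY2 \<notin> HY4 ` {1..k}" by auto
  then show ?thesis unfolding nbrs_HY3 by (simp add: sum.reindex inj_on_def add.commute)
qed

lemma adjacent_PU1: "{x \<in> V - {PU 1}. E x (PU 1)} = {HU}"
  unfolding H_verts_def H_adj_def H_edge0_def using T_ge_1 by auto

lemma card_interior_ge: "l * k \<le> card (V - {PU 1})"
proof -
  have "card ((\<lambda>(i, r). HX i r) ` ({1..l} \<times> {1..k})) = l * k"
    by (subst card_image) (auto simp: inj_on_def)
  moreover have "(\<lambda>(i, r). HX i r) ` ({1..l} \<times> {1..k}) \<subseteq> V - {PU 1}" by auto
  ultimately show ?thesis using finite_V by (metis card_mono finite_Diff)
qed

lemma gdist_PV1_PU1:
  assumes "l \<ge> 4"
  shows "gdist V E (PV 1) (PU 1) = 7"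
proof (rule gdist_eqI)
  \<comment> \<open>a lower bound for the distance to u_1 that changes by at most 1 along each edge\<close>
  define h :: "hvert \<Rightarrow> nat" where "h = (\<lambda>x. case x of PU j \<Rightarrow> 0 | HU \<Rightarrow> 1 | HY1 r \<Rightarrow> 2
    | HY2 \<Rightarrow> 3 | HY3 \<Rightarrow> 4 | HY4 r \<Rightarrow> 5 | HV \<Rightarrow> 6 | PV j \<Rightarrow> 7 | HX i r \<Rightarrow> min (i + 1) 6)"
  show "E x y \<Longrightarrow> h x \<le> h y + 1" for x y
    unfolding H_adj_def H_edge0_def h_def using assms by (auto split: hvert.splits)
  show "h (PV 1) = h (PU 1) + 7" unfolding h_def by simp
  show "is_walk V E [PV 1, HV, HY4 1, HY3, HY2, HY1 1, HU, PU 1]"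
    unfolding is_walk_def using k_ge_1 T_ge_1
    by (simp add: All_less_Suc numeral_eq_Suc H_adj_def H_edge0_def)
qed simp_all

end

section \<open>The positive eigenvector on H\<close>

locale H_eigvec = H_graph +
  fixes f :: "hvert \<Rightarrow> real" and lam :: real
  assumes eig: "Ls_eig (H_verts l k T) (H_adj l k T) (PU 1) f lam"
    and pos: "\<forall>x\<in>H_verts l k T - {PU 1}. f x > 0"
    and f_PU1: "f (PU 1) = 0"
    \<comment> \<open>the quantitative meaning of k being sufficiently large\<close>
    and k_large: "6 * (real l + 1) * real (card (H_verts l k T)) \<le> (real k)^2"
begin

abbreviation xval :: "nat \<Rightarrow> real" where "xval i \<equiv> f (path_vertex 1 i)"

lemma f_local_eq: "x \<in> V - {PU 1} \<Longrightarrow> (\<Sum>y\<in>nbrs V E x. f x - f y) = lam * f x"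
  using Ls_eig_local_eq[OF finite_V eig f_PU1] by blast

lemma lam_sum_f: "lam * (\<Sum>x\<in>V - {PU 1}. f x) = f HU"
  using Ls_eig_sum_eq_boundary[OF finite_V _ E_sym eig f_PU1, unfolded adjacent_PU1] T_ge_1 by simp

lemma lam_pos: "lam > 0"
  using Ls_eig_pos_eigenvalue[OF finite_V _ E_sym eig f_PU1 pos, of HU] adjacent_PU1 T_ge_1
  by auto

lemma f_HU_pos: "f HU > 0"
  using pos by simp

lemma f_HU_min: "x \<in> V - {PU 1} \<Longrightarrow> f HU \<le> f x"
proof -
  have "V - {PU 1} \<noteq> {}" using mem_V(1) by blast
  then obtain m where "is_arg_min f (\<lambda>x. x \<in> V - {PU 1}) m"
    using ex_is_arg_min_if_finite[OF finite_Diff[OF finite_V]] by blast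
  then have m: "m \<in> V - {PU 1}" "\<forall>x\<in>V - {PU 1}. f m \<le> f x"
    unfolding is_arg_min_linorder by auto
  then have "E m (PU 1)" by (intro Ls_eig_min_adjacent[OF finite_V eig f_PU1 lam_pos pos])
  then have "m = HU" using m(1) adjacent_PU1 by blast
  then show "x \<in> V - {PU 1} \<Longrightarrow> f HU \<le> f x" using m(2) by blast
qed

lemma lam_card_le: "lam * real (card (V - {PU 1})) \<le> 1"
proof -
  have "real (card (V - {PU 1})) * f HU \<le> (\<Sum>x\<in>V - {PU 1}. f x)"
    using sum_bounded_below[of "V - {PU 1}" "f HU" f] f_HU_min by simp
  then have "lam * (real (card (V - {PU 1})) * f HU) \<le> f HU"
    using lam_sum_f lam_pos by (metis mult_left_mono less_imp_le)
  then show ?thesis using f_HU_pos by (simp add: mult.assoc[symmetric])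
qed

lemma k_lower: "6 * real l * (real l + 1) \<le> real k"
proof -
  have "real l * real k \<le> real (card V)"
    using card_interior_ge card_Diff1_le[of V "PU 1"] by (metis le_trans of_nat_le_iff of_nat_mult)
  have "(6 * real l * (real l + 1)) * real k = 6 * (real l + 1) * (real l * real k)"
    by (simp add: algebra_simps)
  also have "\<dots> \<le> 6 * (real l + 1) * real (card V)"
    using \<open>real l * real k \<le> real (card V)\<close> by (intro mult_left_mono) auto
  also have "\<dots> \<le> real k * real k" using k_large by (simp add: power2_eq_square)
  finally have "(6 * real l * (real l + 1)) * real k \<le> real k * real k" .
  moreover have "0 < real k" using k_ge_1 by simp
  ultimately show ?thesis by (rule mult_right_le_imp_le)
qed

lemma Suc_l_sq_le_k: "(real l + 1)^2 \<le> real k"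
proof -
  have "(real l + 1)^2 = (real l + 1) * (real l + 1)" by (simp add: power2_eq_square)
  also have "\<dots> \<le> (6 * real l) * (real l + 1)" using l_ge_2 by (intro mult_right_mono) auto
  also have "\<dots> \<le> real k" using k_lower by simp
  finally show ?thesis .
qed

lemma Suc_l_le_k: "real l + 1 \<le> real k"
proof -
  have "real l + 1 \<le> (real l + 1)^2" by (simp add: power2_eq_square)
  then show ?thesis using Suc_l_sq_le_k by simp
qed

lemma lam_k_le: "lam * real k \<le> 1"
proof -
  have "real k \<le> real l * real k" using l_ge_2 by (simp add: mult_le_cancel_right1)
  then have "lam * real k \<le> lam * (real l * real k)"
    using lam_pos by (intro mult_left_mono) auto
  also have "\<dots> \<le> lam * real (card (V - {PU 1}))"
    using lam_pos card_interior_ge by (intro mult_left_mono) (auto simp flip: of_nat_mult)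
  finally show ?thesis using lam_card_le by simp
qed

lemma lam_Suc_l_sq_le: "lam * (real l + 1)^2 \<le> 1"
proof -
  have "lam * (real l + 1)^2 \<le> lam * real k"
    using Suc_l_sq_le_k lam_pos by (intro mult_left_mono) auto
  then show ?thesis using lam_k_le by simp
qed

lemma lam_le_half: "lam \<le> 1/2"
proof -
  have "lam * 3 \<le> lam * real k" using Suc_l_le_k l_ge_2 lam_pos by (intro mult_left_mono) auto
  then show ?thesis using lam_k_le by simp
qed

lemma path_recurrence:
  assumes "r \<in> {1..k}" "1 \<le> i" "i \<le> l"
  shows "f (path_vertex r (Suc i)) = (2 - lam) * f (path_vertex r i) - f (path_vertex r (i - 1))"
proof -
  have "path_vertex r (i - 1) \<noteq> path_vertex r (i + 1)" unfolding path_vertex_def by auto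
  moreover have "(\<Sum>y\<in>nbrs V E (HX i r). f (HX i r) - f y) = lam * f (HX i r)"
    using f_local_eq assms by simp
  ultimately show ?thesis using assms by (simp add: nbrs_HX path_vertex_HX algebra_simps)
qed

lemma f_path_vertex:
  assumes "r \<in> {1..k}" "i \<le> l + 1"
  shows "f (path_vertex r i) = xval i"
proof -
  have "f (path_vertex r i) - xval i = 0"
  proof (rule recurrence_zero[where \<delta> = "\<lambda>i. f (path_vertex r i) - xval i" and n = l])
    fix j assume j: "1 \<le> j" "j \<le> l"
    have one: "1 \<in> {1..k}" using k_ge_1 by simp
    show "f (path_vertex r (Suc j)) - xval (Suc j)
        = (2 - lam) * (f (path_vertex r j) - xval j) - (f (path_vertex r (j - 1)) - xval (j - 1))"
      unfolding path_recurrence[OF assms(1) j] path_recurrence[OF one j] by (simp add: algebra_simps)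
  qed (use assms lam_pos lam_Suc_l_sq_le in auto)
  then show ?thesis by simp
qed

lemma f_HX: "i \<in> {1..l} \<Longrightarrow> r \<in> {1..k} \<Longrightarrow> f (HX i r) = xval i"
  using f_path_vertex[of r i] by (simp add: path_vertex_HX)

definition y1_val :: real where "y1_val = (f HU + f HY2) / (2 - lam)"

definition y4_val :: real where "y4_val = (f HY3 + f HV) / (2 - lam)"

lemma y1_val_eq: "(2 - lam) * y1_val = f HU + f HY2"
proof -
  have "2 - lam \<noteq> 0" using lam_le_half by simp
  then show ?thesis unfolding y1_val_def by simp
qed

lemma y4_val_eq: "(2 - lam) * y4_val = f HY3 + f HV"
proof -
  have "2 - lam \<noteq> 0" using lam_le_half by simp
  then show ?thesis unfolding y4_val_def by simp
qed

lemma f_HY1: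
  assumes "r \<in> {1..k}"
  shows "f (HY1 r) = y1_val"
proof -
  have "(2 - lam) * f (HY1 r) = f HU + f HY2"
    using f_local_eq[of "HY1 r"] assms by (simp add: nbrs_HY1 algebra_simps)
  moreover have "2 - lam \<noteq> 0" using lam_le_half by simp
  ultimately show ?thesis unfolding y1_val_def by (simp add: field_simps)
qed

lemma f_HY4:
  assumes "r \<in> {1..k}"
  shows "f (HY4 r) = y4_val"
proof -
  have "(2 - lam) * f (HY4 r) = f HY3 + f HV"
    using f_local_eq[of "HY4 r"] assms by (simp add: nbrs_HY4 algebra_simps)
  moreover have "2 - lam \<noteq> 0" using lam_le_half by simp
  ultimately show ?thesis unfolding y4_val_def by (simp add: field_simps)
qed

lemma HU_le_y1_val: "f HU \<le> y1_val"
  using f_HU_min[of "HY1 1"] f_HY1[of 1] k_ge_1 by simp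

lemma HU_le_y4_val: "f HU \<le> y4_val"
  using f_HU_min[of "HY4 1"] f_HY4[of 1] k_ge_1 by simp

lemma PV_eq: "j \<in> {1..T} \<Longrightarrow> (1 - lam) * f (PV j) = f HV"
  using f_local_eq[of "PV j"] by (simp add: nbrs_PV algebra_simps)

lemma PU_eq: "j \<in> {1..T} \<Longrightarrow> j \<noteq> 1 \<Longrightarrow> (1 - lam) * f (PU j) = f HU"
  using f_local_eq[of "PU j"] by (simp add: nbrs_PU algebra_simps)

lemma HU_eq:
  "real k * (f HU - xval 1) + real k * (f HU - y1_val) + (\<Sum>j\<in>{1..T}. f HU - f (PU j))
    = lam * f HU"
  using f_local_eq[of HU] l_ge_2 by (simp add: sum_nbrs_HU f_HX f_HY1)

lemma HV_eq:
  "real k * (f HV - xval l) + real k * (f HV - y4_val) + (\<Sum>j\<in>{1..T}. f HV - f (PV j))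
    = lam * f HV"
  using f_local_eq[of HV] l_ge_2 by (simp add: sum_nbrs_HV f_HX f_HY4)

lemma HY2_eq: "real k * (f HY2 - y1_val) + (f HY2 - f HY3) = lam * f HY2"
  using f_local_eq[of HY2] by (simp add: sum_nbrs_HY2 f_HY1)

lemma HY3_eq: "real k * (f HY3 - y4_val) + (f HY3 - f HY2) = lam * f HY3"
  using f_local_eq[of HY3] by (simp add: sum_nbrs_HY3 f_HY4)

lemma PU_sum_le: "(\<Sum>j\<in>{1..T}. f HU - f (PU j)) \<le> f HU"
proof -
  have "(\<Sum>j\<in>{1..T}. f HU - f (PU j)) \<le> (\<Sum>j\<in>{1..T}. if j = 1 then f HU else 0)"
    using f_PU1 f_HU_min by (intro sum_mono) auto
  also have "\<dots> = f HU" using T_ge_1 by simp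
  finally show ?thesis .
qed

lemma xval_pos: "i \<le> l + 1 \<Longrightarrow> xval i > 0"
  using pos path_vertex_mem[of 1 i] k_ge_1 by auto

lemma HU_le_xval: "i \<le> l + 1 \<Longrightarrow> f HU \<le> xval i"
  using f_HU_min path_vertex_mem[of 1 i] k_ge_1 by auto

lemma x1_y1_bounds: "real k * (xval 1 - f HU) \<le> f HU" "real k * (y1_val - f HU) \<le> f HU"
proof -
  have "0 \<le> real k * (xval 1 - f HU)" "0 \<le> real k * (y1_val - f HU)"
    using HU_le_xval[of 1] HU_le_y1_val k_ge_1 by auto
  moreover have "real k * (xval 1 - f HU) + real k * (y1_val - f HU)
      = (\<Sum>j\<in>{1..T}. f HU - f (PU j)) - lam * f HU"
    using HU_eq by (simp add: algebra_simps)
  moreover have "lam * f HU > 0" using lam_pos f_HU_pos by simp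
  ultimately show "real k * (xval 1 - f HU) \<le> f HU" "real k * (y1_val - f HU) \<le> f HU"
    using PU_sum_le by linarith+
qed

lemma path_increment:
  "1 \<le> i \<Longrightarrow> i \<le> l \<Longrightarrow> xval (Suc i) - xval i = (xval i - xval (i - 1)) - lam * xval i"
  using path_recurrence[of 1 i] k_ge_1 by (simp add: algebra_simps)

lemma path_increment_le: "i \<le> l \<Longrightarrow> xval (Suc i) - xval i \<le> xval 1 - xval 0"
proof (induction i)
  case 0
  then show ?case by simp
next
  case (Suc i)
  have "lam * xval (Suc i) \<ge> 0" using xval_pos[of "Suc i"] Suc.prems lam_pos by simp
  then show ?case using path_increment[of "Suc i"] Suc by simp
qed

lemma path_growth_le: "m \<le> l + 1 \<Longrightarrow> xval m - f HU \<le> real m * (xval 1 - f HU)"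
proof (induction m)
  case 0
  then show ?case by simp
next
  case (Suc m)
  then show ?case using path_increment_le[of m] by (simp add: algebra_simps)
qed

lemma HV_minus_HU_le: "real k * (f HV - f HU) \<le> (real l + 1) * f HU"
proof -
  have "f HV - f HU \<le> (real l + 1) * (xval 1 - f HU)"
    using path_growth_le[of "l + 1"] by (simp add: add.commute)
  then have "real k * (f HV - f HU) \<le> real k * ((real l + 1) * (xval 1 - f HU))"
    by (intro mult_left_mono) auto
  also have "\<dots> = (real l + 1) * (real k * (xval 1 - f HU))" by simp
  also have "\<dots> \<le> (real l + 1) * f HU" using x1_y1_bounds(1) by (intro mult_left_mono) auto
  finally show ?thesis .
qed

lemma xval_le: "i \<le> l + 1 \<Longrightarrow> xval i \<le> 2 * f HU"
proof -
  assume i: "i \<le> l + 1"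
  have "real i * (xval 1 - f HU) \<le> real k * (xval 1 - f HU)"
    using i Suc_l_le_k HU_le_xval[of 1] by (intro mult_right_mono) auto
  then show ?thesis using path_growth_le[OF i] x1_y1_bounds(1) by linarith
qed

lemma y1_val_le: "y1_val \<le> 2 * f HU"
proof -
  have "y1_val - f HU \<le> real k * (y1_val - f HU)"
    using k_ge_1 HU_le_y1_val mult_right_mono[of 1 "real k" "y1_val - f HU"] by simp
  then show ?thesis using x1_y1_bounds(2) by linarith
qed

lemma f_HY2_le: "f HY2 \<le> 3 * f HU"
proof -
  have "lam * y1_val \<ge> 0" using lam_pos HU_le_y1_val f_HU_pos by simp
  then show ?thesis using y1_val_eq y1_val_le by (simp add: algebra_simps)
qed

lemma f_HY3_le: "f HY3 \<le> 4 * f HU"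
proof -
  have nonneg: "lam * y1_val \<ge> 0" "lam * f HY2 \<ge> 0"
    using lam_pos HU_le_y1_val f_HU_min[of HY2] f_HU_pos by simp_all
  have "f HY2 - y1_val \<le> y1_val - f HU"
    using y1_val_eq nonneg by (simp add: algebra_simps)
  then have "real k * (f HY2 - y1_val) \<le> real k * (y1_val - f HU)"
    by (intro mult_left_mono) auto
  then show ?thesis using HY2_eq x1_y1_bounds(2) f_HY2_le nonneg by linarith
qed

lemma y4_val_le: "y4_val \<le> 6 * f HU"
proof -
  have "lam * y4_val \<le> y4_val"
    using lam_pos lam_le_half HU_le_y4_val f_HU_pos by (intro mult_left_le_one_le) auto
  then show ?thesis using y4_val_eq f_HY3_le xval_le[of "l + 1"] by (simp add: algebra_simps)
qed

lemma f_PV_bounds: "j \<in> {1..T} \<Longrightarrow> f HV \<le> f (PV j) \<and> f (PV j) \<le> 2 * f HV"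
proof -
  assume j: "j \<in> {1..T}"
  have "0 < f (PV j)" using pos j by simp
  then have "0 \<le> lam * f (PV j)" "lam * f (PV j) \<le> f (PV j) / 2"
    using lam_pos lam_le_half by (simp_all add: mult_right_mono)
  then show ?thesis using PV_eq[OF j] by (simp add: algebra_simps)
qed

lemma f_PU_le: "j \<in> {1..T} \<Longrightarrow> j \<noteq> 1 \<Longrightarrow> f (PU j) \<le> 2 * f HU"
proof -
  assume j: "j \<in> {1..T}" "j \<noteq> 1"
  have "0 < f (PU j)" using pos j by simp
  then have "lam * f (PU j) \<le> f (PU j) / 2" using lam_le_half by (simp add: mult_right_mono)
  then show ?thesis using PU_eq[OF j] by (simp add: algebra_simps)
qed

lemma f_le_6_HU: "x \<in> V - {PU 1} \<Longrightarrow> f x \<le> 6 * f HU"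
proof (induction x)
  case HU
  then show ?case using f_HU_pos by simp
next
  case HV
  then show ?case using xval_le[of "l + 1"] f_HU_pos by simp
next
  case (HX i r)
  then have "i \<le> l + 1" "f (HX i r) = xval i" using f_HX by auto
  then show ?case using xval_le[of i] f_HU_pos by simp
next
  case (HY1 r)
  then show ?case using f_HY1 y1_val_le f_HU_pos by simp
next
  case HY2
  then show ?case using f_HY2_le f_HU_pos by simp
next
  case HY3
  then show ?case using f_HY3_le f_HU_pos by simp
next
  case (HY4 r)
  then show ?case using f_HY4 y4_val_le by simp
next
  case (PU j)
  then show ?case using f_PU_le[of j] f_HU_pos by simp
next
  case (PV j)
  then show ?case using f_PV_bounds[of j] xval_le[of "l + 1"] f_HU_pos by simp
qed

lemma lam_card_ge: "1 \<le> 6 * lam * real (card (V - {PU 1}))"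
proof -
  have "(\<Sum>x\<in>V - {PU 1}. f x) \<le> real (card (V - {PU 1})) * (6 * f HU)"
    using sum_bounded_above[of "V - {PU 1}" f "6 * f HU"] f_le_6_HU by simp
  then have "f HU \<le> lam * (real (card (V - {PU 1})) * (6 * f HU))"
    using lam_sum_f lam_pos by (metis mult_left_mono less_imp_le)
  then have "f HU * 1 \<le> f HU * (6 * lam * real (card (V - {PU 1})))"
    by (simp add: algebra_simps)
  then show ?thesis by (rule mult_left_le_imp_le) (use f_HU_pos in simp)
qed

lemma HV_minus_HU_le_lam: "f HV - f HU \<le> lam * real k * f HV"
proof -
  have "6 * lam * real (card (V - {PU 1})) \<le> 6 * lam * real (card V)"
    using lam_pos card_Diff1_le[of V "PU 1"] by (intro mult_left_mono) auto
  then have "1 \<le> 6 * lam * real (card V)" using lam_card_ge by linarith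
  then have "(real l + 1) * 1 \<le> (real l + 1) * (6 * lam * real (card V))"
    by (rule mult_left_mono) simp
  also have "\<dots> = lam * (6 * (real l + 1) * real (card V))" by (simp add: algebra_simps)
  also have "\<dots> \<le> lam * (real k)^2" using k_large lam_pos by (intro mult_left_mono) auto
  finally have "real l + 1 \<le> lam * (real k)^2" by simp
  have "real k * (f HV - f HU) \<le> (real l + 1) * f HU" by (rule HV_minus_HU_le)
  also have "\<dots> \<le> lam * (real k)^2 * f HU"
    using \<open>real l + 1 \<le> lam * (real k)^2\<close> f_HU_pos by (intro mult_right_mono) auto
  also have "\<dots> = real k * (lam * real k * f HU)" by (simp add: power2_eq_square)
  finally have "f HV - f HU \<le> lam * real k * f HU" using k_ge_1 by simp
  also have "\<dots> \<le> lam * real k * f HV"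
    using f_HU_min[of HV] lam_pos by (intro mult_left_mono) auto
  finally show ?thesis .
qed

text \<open>Eliminating f(y_{3,*}) from the equations at y_{3,*} and y_{4,1} expresses f(y_{4,1}) through
  f(v) and f(y_{2,*}) \<ge> f(u); the lower bound on lam makes f(u) close enough to f(v).\<close>

lemma HV_le_y4_val: "f HV \<le> y4_val"
proof -
  have HY3_val: "f HY3 = (2 - lam) * y4_val - f HV" using y4_val_eq by simp
  have elim: "y4_val * ((1 - lam) * (real k + 2 - lam)) = (real k + 1 - lam) * f HV + f HY2"
    using HY3_eq unfolding HY3_val by (simp add: algebra_simps)
  have "f HV * (lam^2 - 2 * lam) \<le> 0"
    using lam_pos lam_le_half f_HU_min[of HV] f_HU_pos
    by (intro mult_nonneg_nonpos) (auto simp: power2_eq_square)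
  then have "f HY2 \<ge> f HV * (1 - 2 * lam - lam * real k + lam^2)"
    using f_HU_min[of HY2] HV_minus_HU_le_lam by (simp add: algebra_simps)
  then have "y4_val * ((1 - lam) * (real k + 2 - lam)) \<ge> f HV * ((1 - lam) * (real k + 2 - lam))"
    using elim by (simp add: algebra_simps power2_eq_square)
  moreover have "(1 - lam) * (real k + 2 - lam) > 0" using lam_le_half by simp
  ultimately show ?thesis by (meson mult_le_cancel_right_pos)
qed

lemma xval_l_less_HV: "xval l < f HV"
proof -
  have "(\<Sum>j\<in>{1..T}. f HV - f (PV j)) \<le> 0" using f_PV_bounds by (intro sum_nonpos) auto
  moreover have "real k * (f HV - y4_val) \<le> 0" using HV_le_y4_val by (simp add: mult_nonneg_nonpos)
  moreover have "lam * f HV > 0" using lam_pos pos by simp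
  ultimately have "real k * (f HV - xval l) > 0" using HV_eq by linarith
  then show ?thesis by (simp add: zero_less_mult_iff)
qed

lemma path_increment_pos: "i \<le> l \<Longrightarrow> xval i < xval (Suc i)"
proof (induction i rule: inc_induct)
  case base
  then show ?case using xval_l_less_HV by simp
next
  case (step n)
  have "lam * xval (Suc n) > 0" using lam_pos xval_pos[of "Suc n"] step.hyps by simp
  then show ?case using path_increment[of "Suc n"] step by simp
qed

lemma xval_strict_mono: "i < j \<Longrightarrow> j \<le> l + 1 \<Longrightarrow> xval i < xval j"
proof (induction j)
  case 0
  then show ?case by simp
next
  case (Suc j)
  then show ?case using path_increment_pos[of j] by (cases "i = j") auto
qed

context
  fixes p :: "hvert \<Rightarrow> hvert"
  assumes tree: "spectral_tree V E (PU 1) f p"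
begin

lemma parent: "x \<in> V - {PU 1} \<Longrightarrow> p x \<in> nbrs V E x \<and> (\<forall>y\<in>nbrs V E x. f (p x) \<le> f y)"
  using tree unfolding spectral_tree_def by blast

lemma parent_PV1: "p (PV 1) = HV"
  using parent[of "PV 1"] T_ge_1 by (simp add: nbrs_PV)

lemma parent_HV: "\<exists>r\<in>{1..k}. p HV = path_vertex r l"
proof -
  have "p HV \<in> nbrs V E HV" "f (p HV) \<le> f (HX l 1)"
    using parent[of HV] k_ge_1 by (auto simp: nbrs_HV)
  moreover have "f (HX l 1) < f HV" using f_HX[of l 1] l_ge_2 k_ge_1 xval_l_less_HV by simp
  moreover have "f HV \<le> f (HY4 r)" if "r \<in> {1..k}" for r using that f_HY4 HV_le_y4_val by simp
  moreover have "f HV \<le> f (PV j)" if "j \<in> {1..T}" for j using f_PV_bounds[OF that] by simp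
  ultimately have "p HV \<in> HX l ` {1..k}" unfolding nbrs_HV by fastforce
  then show ?thesis using l_ge_2 path_vertex_HX[of l] by auto
qed

lemma parent_path_vertex:
  assumes "r \<in> {1..k}" "1 \<le> i" "i \<le> l"
  shows "p (path_vertex r i) = path_vertex r (i - 1)"
proof -
  have "p (HX i r) \<in> {path_vertex r (i - 1), path_vertex r (i + 1)}"
    and "f (p (HX i r)) \<le> f (path_vertex r (i - 1))"
    using parent[of "HX i r"] assms by (auto simp: nbrs_HX)
  moreover have "f (path_vertex r (i - 1)) < f (path_vertex r (i + 1))"
    using xval_strict_mono[of "i - 1" "i + 1"] f_path_vertex[OF assms(1)] assms by simp
  ultimately show ?thesis using assms by (auto simp: path_vertex_HX)
qed

lemma parent_HU: "p HU = PU 1"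
proof -
  have "PU 1 \<in> nbrs V E HU" using T_ge_1 by (simp add: nbrs_HU)
  then have "p HU \<in> nbrs V E HU" "f (p HU) \<le> f (PU 1)" using parent[of HU] by auto
  then show ?thesis using pos f_PU1 unfolding nbrs_def by force
qed

lemma tree_path_length: "spectral_path_length (PU 1) p (PV 1) = l + 3"
proof -
  obtain r where r: "r \<in> {1..k}" "p HV = path_vertex r l" using parent_HV by blast
  have descend: "(p ^^ j) HV = path_vertex r (l + 1 - j)" if "j \<le> l + 1" for j
    using that
  proof (induction j)
    case 0
    then show ?case by simp
  next
    case (Suc j)
    show ?case
    proof (cases "j = 0")
      case True
      then show ?thesis using r(2) by simp
    next
      case False
      then have "p (path_vertex r (l + 1 - j)) = path_vertex r (l - j)"
        using parent_path_vertex[OF r(1), of "l + 1 - j"] Suc.prems False by simp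
      then show ?thesis using Suc.IH Suc.prems by simp
    qed
  qed
  have from_PV1: "(p ^^ Suc j) (PV 1) = path_vertex r (l + 1 - j)" if "j \<le> l + 1" for j
    by (simp only: funpow_Suc_right comp_apply parent_PV1 descend[OF that])
  have "(p ^^ (l + 3)) (PV 1) = PU 1"
    using from_PV1[of "l + 1"] parent_HU by (simp add: numeral_3_eq_3)
  moreover have "(p ^^ m) (PV 1) \<noteq> PU 1" if "m < l + 3" for m
  proof (cases m)
    case (Suc j)
    then show ?thesis using from_PV1[of j] path_vertex_mem[OF r(1), of "l + 1 - j"] that by auto
  qed simp
  ultimately show ?thesis
    unfolding spectral_path_length_def by (intro Least_equality) (blast, meson not_le)
qed

end

end

lemma (in H_graph) spectral_path_length_PV1_PU1:
  assumes "6 * (real l + 1) * real (card V) \<le> (real k)^2"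
    and "spectral_vector V E (PU 1) f" "spectral_tree V E (PU 1) f p"
  shows "spectral_path_length (PU 1) p (PV 1) = l + 3"
proof -
  obtain lam where "Ls_eig V E (PU 1) f lam" using assms(2) unfolding spectral_vector_def by blast
  then interpret H_eigvec l k T f lam
    using assms(1,2) unfolding spectral_vector_def by unfold_locales auto
  show ?thesis using assms(3) by (rule tree_path_length)
qed

lemma H_large_eventually:
  fixes t :: real
  assumes "t > 0"
  shows "\<exists>K. \<forall>k\<ge>K. 1 \<le> nat \<lfloor>t * real k\<rfloor> \<and>
    6 * (real l + 1) * real (card (H_verts l k (nat \<lfloor>t * real k\<rfloor>))) \<le> (real k)^2"
proof (intro exI allI impI)
  define C where "C = 6 * (real l + 1) * (real l + 6 + 2 * t)"
  fix k :: nat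
  assume "nat \<lceil>C + 1 / t\<rceil> \<le> k"
  then have k: "C + 1 / t \<le> real k" by simp
  define T where "T = nat \<lfloor>t * real k\<rfloor>"
  have "0 \<le> C" "0 < 1 / t" unfolding C_def using assms by simp_all
  then have "1 / t \<le> real k" "C \<le> real k" using k by linarith+
  then have "0 < real k" using \<open>0 < 1 / t\<close> by linarith
  then have "1 \<le> real k" by simp
  have "1 \<le> t * real k" using \<open>1 / t \<le> real k\<close> assms by (simp add: field_simps)
  then have T_ge_1: "1 \<le> T" and T_le: "real T \<le> t * real k" unfolding T_def by linarith+
  have "real (card (H_verts l k T)) \<le> real (4 + l * k + 2 * k + 2 * T)"
    using card_H_verts_le by (rule of_nat_mono)
  also have "\<dots> \<le> (real l + 6 + 2 * t) * real k"
    using T_le \<open>1 \<le> real k\<close> by (simp add: algebra_simps)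
  finally have "6 * (real l + 1) * real (card (H_verts l k T))
      \<le> 6 * (real l + 1) * ((real l + 6 + 2 * t) * real k)"
    by (intro mult_left_mono) auto
  also have "\<dots> = C * real k" unfolding C_def by (simp add: algebra_simps)
  also have "\<dots> \<le> real k * real k" using \<open>C \<le> real k\<close> by (intro mult_right_mono) auto
  finally show "1 \<le> nat \<lfloor>t * real k\<rfloor> \<and>
      6 * (real l + 1) * real (card (H_verts l k (nat \<lfloor>t * real k\<rfloor>))) \<le> (real k)^2"
    using T_ge_1 unfolding T_def by (simp add: power2_eq_square)
qed

theorem theorem19:
  fixes l :: nat and t :: real
  assumes "l > 6" and "t > 0"
  shows "\<exists>K::nat. \<forall>k \<ge> K. k > 2 \<longrightarrow>
    (let T = nat \<lfloor>t * real k\<rfloor>; Vs = H_verts l k T; E = H_adj l k T in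
      (\<forall>f p. spectral_vector Vs E (PU 1) f \<longrightarrow> spectral_tree Vs E (PU 1) f p \<longrightarrow>
              spectral_path_length (PU 1) p (PV 1) = l + 3)
      \<and> gdist Vs E (PV 1) (PU 1) = 7)"
proof -
  obtain K where K: "\<And>k. K \<le> k \<Longrightarrow> 1 \<le> nat \<lfloor>t * real k\<rfloor> \<and>
      6 * (real l + 1) * real (card (H_verts l k (nat \<lfloor>t * real k\<rfloor>))) \<le> (real k)^2"
    using H_large_eventually[OF assms(2)] by blast
  show ?thesis
  proof (intro exI[of _ K] allI impI, goal_cases)
    case (1 k)
    interpret H_graph l k "nat \<lfloor>t * real k\<rfloor>"
      using assms(1) 1 K[OF 1(1)] by unfold_locales auto
    show ?case
      using spectral_path_length_PV1_PU1 gdist_PV1_PU1 K[OF 1(1)] assms(1) by (simp add: Let_def)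
  qed
qed

end
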